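(* Let $H$ be a subgroup of Thompson's group $F$ such that: (1) for every $r\in\mathbb{N}$, $1^r0\sim_H 10$; (2) for every $s\in\mathbb{N}$, $0^s1\sim_H 01$; (3) $01\sim_H 10\sim_H 010\sim_H 011$. Then $\mathrm{Cl}(H)$ contains the derived subgroup $[F,F]$.
   Context: Thompson's group $F$ is the group of all piecewise linear homeomorphisms of $[0,1]$ with finitely many breakpoints, all breakpoints dyadic fractions and all slopes integer powers of $2$. For a finite binary word $u$, let $[u]$ denote the dyadic interval of numbers whose binary expansion begins with $u$. An element $h\in F$ has the pair of branches $u\rightarrow v$ if $h(.u\alpha)=.v\alpha$ for every infinite binary word $\alpha$ (i.e. $h$ maps $[u]$ linearly onto $[v]$). For $H\le F$ and finite binary words $u,v$, write $u\sim_H v$ if some $h\in H$ has the pair of branches $u\rightarrow v$ (an equivalence relation). The closure $\mathrm{Cl}(H)$ is the subgroup of all $f\in F$ for which there is a finite subdivision of $[0,1]$ into intervals such that on each interval $f$ coincides with some element of $H$. Words like $1^r0$ denote $r$ copies of $1$ followed by $0$. *)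

theory Defs
  imports Complex_Main "HOL-Algebra.Generated_Groups"
begin

definition dyadic :: "real \<Rightarrow> bool" where
  "dyadic x \<longleftrightarrow> (\<exists>(k::int) (n::nat). x = real_of_int k / 2 ^ n)"

definition pl_dyadic :: "(real \<Rightarrow> real) \<Rightarrow> bool" where
  "pl_dyadic f \<longleftrightarrow> (\<exists>bs :: real list.
      length bs \<ge> 2 \<and> sorted_wrt (<) bs \<and> hd bs = 0 \<and> last bs = 1 \<and>
      (\<forall>b\<in>set bs. dyadic b) \<and>
      (\<forall>i. Suc i < length bs \<longrightarrow>
         (\<exists>(k::int) (c::real). \<forall>x\<in>{bs ! i .. bs ! Suc i}. f x = 2 powr (real_of_int k) * x + c)))"

text \<open>Elements of F are represented as functions on the reals that are
  piecewise linear homeomorphisms of [0,1] as above, and the identity outside [0,1]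
  (so that F is a group under composition).\<close>
definition thompsonF :: "(real \<Rightarrow> real) set" where
  "thompsonF = {f. (\<forall>x. x \<notin> {0..1} \<longrightarrow> f x = x) \<and>
                   bij_betw f {0..1} {0..1} \<and> continuous_on {0..1} f \<and>
                   continuous_on {0..1} (inv_into {0..1} f) \<and> pl_dyadic f}"

definition thompsonG :: "(real \<Rightarrow> real) monoid" where
  "thompsonG = \<lparr>carrier = thompsonF, mult = (\<circ>), one = id\<rparr>"

text \<open>Finite binary words are bool lists (True = digit 1); infinite binary words
  are functions nat \<Rightarrow> bool.\<close>
definition word_val :: "(nat \<Rightarrow> bool) \<Rightarrow> real" where
  "word_val \<alpha> = (\<Sum>n. (if \<alpha> n then 1 else 0) / 2 ^ Suc n)"

definition prepend :: "bool list \<Rightarrow> (nat \<Rightarrow> bool) \<Rightarrow> (nat \<Rightarrow> bool)" where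
  "prepend u \<alpha> = (\<lambda>n. if n < length u then u ! n else \<alpha> (n - length u))"

definition has_branches :: "(real \<Rightarrow> real) \<Rightarrow> bool list \<Rightarrow> bool list \<Rightarrow> bool" where
  "has_branches h u v \<longleftrightarrow> (\<forall>\<alpha>. h (word_val (prepend u \<alpha>)) = word_val (prepend v \<alpha>))"

definition sim :: "(real \<Rightarrow> real) set \<Rightarrow> bool list \<Rightarrow> bool list \<Rightarrow> bool" where
  "sim H u v \<longleftrightarrow> (\<exists>h\<in>H. has_branches h u v)"

definition Cl :: "(real \<Rightarrow> real) set \<Rightarrow> (real \<Rightarrow> real) set" where
  "Cl H = {f \<in> thompsonF. \<exists>as :: real list.
      length as \<ge> 2 \<and> sorted_wrt (<) as \<and> hd as = 0 \<and> last as = 1 \<and>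
      (\<forall>i. Suc i < length as \<longrightarrow>
         (\<exists>h\<in>H. \<forall>x\<in>{as ! i .. as ! Suc i}. f x = h x))}"

end

(*
  Every element of [F,F] is the identity near 0 and near 1: the slope of f at an endpoint
  is a homomorphism from F to an abelian group.  For such an f, a fine enough dyadic
  subdivision of [0,1] has the property that f maps each cell [u] affinely onto a dyadic
  cell [v].  The two end cells lie where f is the identity; for every interior cell both u
  and v contain both digits, and the hypotheses make all such words ~H-equivalent
  (1^r 0 w and 0^s 1 w reduce to 01 w, and 01 b ~ 01 absorbs w).  Hence on each interior
  cell f agrees with an element of H.
*)

theory Submission
  imports Defs "HOL-Analysis.Abstract_Topological_Spaces" "HOL-Analysis.Ordered_Euclidean_Space"
begin

lemma dyadic_iff_eventually_Ints:
  "dyadic x \<longleftrightarrow> (\<forall>\<^sub>F n in sequentially. x * 2 ^ n \<in> \<int>)"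
proof
  assume "dyadic x"
  then obtain k n where x: "x = of_int k / 2 ^ n" unfolding dyadic_def by blast
  have "x * 2 ^ (n + d) \<in> \<int>" for d
  proof -
    have "x * 2 ^ (n + d) = of_int (k * 2 ^ d)"
      by (simp add: x power_add)
    then show ?thesis by simp
  qed
  then have "x * 2 ^ m \<in> \<int>" if "n \<le> m" for m
    using that le_Suc_ex by blast
  then show "\<forall>\<^sub>F n in sequentially. x * 2 ^ n \<in> \<int>"
    unfolding eventually_sequentially by blast
next
  assume "\<forall>\<^sub>F n in sequentially. x * 2 ^ n \<in> \<int>"
  then obtain n k where "x * 2 ^ n = of_int k"
    unfolding eventually_sequentially by (auto elim!: Ints_cases)
  then have "x = of_int k / 2 ^ n" by (simp add: field_simps)
  then show "dyadic x" unfolding dyadic_def by blast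
qed

lemma dyadic_0 [simp]: "dyadic 0"
  by (simp add: dyadic_iff_eventually_Ints)

lemma dyadic_1 [simp]: "dyadic 1"
  by (simp add: dyadic_iff_eventually_Ints)

lemma dyadic_add: "dyadic x \<Longrightarrow> dyadic y \<Longrightarrow> dyadic (x + y)"
  unfolding dyadic_iff_eventually_Ints
  by (auto elim: eventually_elim2 simp: distrib_right)

lemma dyadic_diff: "dyadic x \<Longrightarrow> dyadic y \<Longrightarrow> dyadic (x - y)"
  unfolding dyadic_iff_eventually_Ints
  by (auto elim: eventually_elim2 simp: left_diff_distrib)

lemma dyadic_scale: "dyadic y \<Longrightarrow> dyadic (2 powr of_int k * y)"
proof -
  assume "dyadic y"
  then obtain j n where y: "y = of_int j / 2 ^ n" unfolding dyadic_def by blast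
  show ?thesis
  proof (cases "k \<ge> 0")
    case True
    then have "2 powr of_int k * y = of_int (2 ^ nat k * j) / 2 ^ n"
      by (simp add: y powr_realpow[symmetric])
    then show ?thesis unfolding dyadic_def by blast
  next
    case False
    then have "2 powr of_int k * y = of_int j / 2 ^ (n + nat (- k))"
      by (simp add: y powr_minus_divide powr_realpow[symmetric] power_add)
    then show ?thesis unfolding dyadic_def by blast
  qed
qed

definition dyadic_affine_on :: "(real \<Rightarrow> real) \<Rightarrow> real \<Rightarrow> real \<Rightarrow> bool" where
  "dyadic_affine_on f x y \<longleftrightarrow> (\<exists>(k::int) c. \<forall>z\<in>{x..y}. f z = 2 powr k * z + c)"

text \<open>Unlike the sorted list in \<^const>\<open>pl_dyadic\<close>, a breakpoint set may be enlarged
  freely, which makes it easy to transport along composition and inversion.\<close>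

definition breakpoint_set :: "(real \<Rightarrow> real) \<Rightarrow> real set \<Rightarrow> bool" where
  "breakpoint_set f B \<longleftrightarrow> finite B \<and> B \<subseteq> {0..1} \<and> {0, 1} \<subseteq> B \<and> (\<forall>b\<in>B. dyadic b) \<and>
     (\<forall>x y. 0 \<le> x \<longrightarrow> x < y \<longrightarrow> y \<le> 1 \<longrightarrow> B \<inter> {x<..<y} = {} \<longrightarrow> dyadic_affine_on f x y)"

lemma dyadic_affine_on_subset:
  "dyadic_affine_on f a b \<Longrightarrow> a \<le> x \<Longrightarrow> y \<le> b \<Longrightarrow> dyadic_affine_on f x y"
  unfolding dyadic_affine_on_def by force

lemma dyadic_affine_on_comp:
  assumes g: "dyadic_affine_on g x y" and f: "dyadic_affine_on f (g x) (g y)"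
    and mono: "mono_on {x..y} g"
  shows "dyadic_affine_on (f \<circ> g) x y"
proof -
  obtain k :: int and c where kc: "\<forall>z\<in>{x..y}. g z = 2 powr k * z + c"
    using g unfolding dyadic_affine_on_def by blast
  obtain l :: int and d where ld: "\<forall>z\<in>{g x..g y}. f z = 2 powr l * z + d"
    using f unfolding dyadic_affine_on_def by blast
  have "(f \<circ> g) z = 2 powr of_int (l + k) * z + (2 powr l * c + d)" if z: "z \<in> {x..y}" for z
  proof -
    have "g z \<in> {g x..g y}"
      using z mono by (auto intro: mono_onD)
    then show ?thesis
      using ld kc z by (simp add: powr_add algebra_simps)
  qed
  then show ?thesis unfolding dyadic_affine_on_def by blast
qed

lemma dyadic_affine_on_inverse:
  assumes f: "dyadic_affine_on f x y" and g: "\<And>z. z \<in> {x'..y'} \<Longrightarrow> g z \<in> {x..y} \<and> f (g z) = z"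
  shows "dyadic_affine_on g x' y'"
proof -
  obtain k :: int and c where kc: "\<forall>z\<in>{x..y}. f z = 2 powr k * z + c"
    using f unfolding dyadic_affine_on_def by blast
  have "g z = 2 powr of_int (- k) * z + - (2 powr of_int (- k) * c)" if "z \<in> {x'..y'}" for z
  proof -
    have "z = 2 powr k * g z + c"
      using g[OF that] kc by metis
    then show ?thesis
      by (simp add: powr_minus field_simps)
  qed
  then show ?thesis unfolding dyadic_affine_on_def by blast
qed

lemma ex_consecutive_bracket:
  "xs \<noteq> [] \<Longrightarrow> hd xs \<le> x \<Longrightarrow> x < last xs \<Longrightarrow>
    \<exists>i. Suc i < length xs \<and> xs ! i \<le> x \<and> x < xs ! Suc i"
  for x :: real
proof (induction xs)
  case Nil
  then show ?case by simp
next
  case (Cons a xs)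
  show ?case
  proof (cases "xs \<noteq> [] \<and> hd xs \<le> x")
    case True
    with Cons obtain i where "Suc i < length xs" "xs ! i \<le> x" "x < xs ! Suc i"
      by auto
    then show ?thesis by (intro exI[of _ "Suc i"]) simp
  next
    case False
    with Cons.prems show ?thesis
      by (intro exI[of _ 0]) (cases xs, auto)
  qed
qed

lemma sorted_set_subset_hd_last: "sorted xs \<Longrightarrow> xs \<noteq> [] \<Longrightarrow> set xs \<subseteq> {hd xs..last xs}"
  by (auto simp: in_set_conv_nth hd_conv_nth last_conv_nth sorted_nth_mono)

lemma sorted_wrt_less_consecutive_gap:
  fixes xs :: "'a::linorder list"
  assumes "sorted_wrt (<) xs" and "Suc i < length xs"
  shows "set xs \<inter> {xs ! i<..<xs ! Suc i} = {}"
proof -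
  have mono: "xs ! a \<le> xs ! b" if "a \<le> b" "b < length xs" for a b
    by (rule sorted_nth_mono[OF strict_sorted_imp_sorted[OF assms(1)] that])
  have "\<not> (xs ! i < xs ! j \<and> xs ! j < xs ! Suc i)" if "j < length xs" for j
    using mono[of j i] mono[of "Suc i" j] assms(2) that by (cases "j \<le> i") auto
  then show ?thesis
    by (auto simp: in_set_conv_nth)
qed

lemma pl_dyadic_imp_ex_breakpoint_set:
  assumes "pl_dyadic f"
  shows "\<exists>B. breakpoint_set f B"
proof -
  obtain bs :: "real list" where len: "length bs \<ge> 2" and sorted: "sorted_wrt (<) bs"
    and hd: "hd bs = 0" and last: "last bs = 1" and dy: "\<forall>b\<in>set bs. dyadic b"
    and pieces: "\<And>i. Suc i < length bs \<Longrightarrow> dyadic_affine_on f (bs ! i) (bs ! Suc i)"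
    using assms unfolding pl_dyadic_def dyadic_affine_on_def by blast
  have ne: "bs \<noteq> []" using len by auto
  have "set bs \<subseteq> {hd bs..last bs}"
    using sorted ne by (simp add: strict_sorted_imp_sorted sorted_set_subset_hd_last)
  moreover have "{0, 1} \<subseteq> set bs"
    using hd last ne by (metis empty_subsetI hd_in_set insert_subset last_in_set)
  moreover have "dyadic_affine_on f x y"
    if xy: "0 \<le> x" "x < y" "y \<le> 1" "set bs \<inter> {x<..<y} = {}" for x y
  proof -
    obtain i where i: "Suc i < length bs" "bs ! i \<le> x" "x < bs ! Suc i"
      using ex_consecutive_bracket[OF ne, of x] hd last xy by auto
    then have "y \<le> bs ! Suc i"
      using xy(4) nth_mem[of "Suc i" bs] by (metis disjoint_iff greaterThanLessThan_iff not_le)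
    then show ?thesis
      using pieces[OF i(1)] i dyadic_affine_on_subset by blast
  qed
  ultimately have "breakpoint_set f (set bs)"
    unfolding breakpoint_set_def using dy hd last by auto
  then show ?thesis ..
qed

lemma breakpoint_set_imp_pl_dyadic:
  assumes "breakpoint_set f B"
  shows "pl_dyadic f"
proof -
  have fin: "finite B" and sub: "B \<subseteq> {0..1}" and ends: "{0, 1} \<subseteq> B" and dy: "\<forall>b\<in>B. dyadic b"
    and aff: "\<And>x y. 0 \<le> x \<Longrightarrow> x < y \<Longrightarrow> y \<le> 1 \<Longrightarrow> B \<inter> {x<..<y} = {} \<Longrightarrow> dyadic_affine_on f x y"
    using assms unfolding breakpoint_set_def by blast+
  define bs where "bs = sorted_list_of_set B"
  have sorted: "sorted_wrt (<) bs" and set_bs: "set bs = B"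
    using fin by (simp_all add: bs_def)
  have "card {0::real, 1} \<le> card B"
    using fin ends by (intro card_mono)
  then have len: "length bs \<ge> 2"
    using fin by (simp add: bs_def)
  then have ne: "bs \<noteq> []" by auto
  have hd_last: "B \<subseteq> {hd bs..last bs}" "hd bs \<in> B" "last bs \<in> B"
    using sorted_set_subset_hd_last[OF strict_sorted_imp_sorted[OF sorted] ne] ne set_bs by auto
  have "hd bs = 0" "last bs = 1"
    using hd_last sub ends by fastforce+
  moreover have "dyadic_affine_on f (bs ! i) (bs ! Suc i)" if i: "Suc i < length bs" for i
  proof (rule aff)
    show "0 \<le> bs ! i" "bs ! Suc i \<le> 1"
      using i sub set_bs nth_mem[of i bs] nth_mem[of "Suc i" bs] by auto
    show "bs ! i < bs ! Suc i"
      using sorted i by (simp add: sorted_wrt_nth_less)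
    show "B \<inter> {bs ! i<..<bs ! Suc i} = {}"
      using sorted_wrt_less_consecutive_gap[OF sorted i] set_bs by simp
  qed
  ultimately show "pl_dyadic f"
    unfolding pl_dyadic_def dyadic_affine_on_def using len sorted set_bs dy by auto
qed

lemma thompsonF_memI:
  assumes id_outside: "\<And>x. x \<notin> {0..1} \<Longrightarrow> f x = x" and bij: "bij_betw f {0..1} {0..1}"
    and cont: "continuous_on {0..1} f" and B: "breakpoint_set f B"
  shows "f \<in> thompsonF"
proof -
  have "continuous_on (f ` {0..1}) (inv_into {0..1} f)"
    using bij cont by (intro continuous_on_inv) (auto simp: bij_betw_def)
  then have "continuous_on {0..1} (inv_into {0..1} f)"
    by (simp only: bij_betw_imp_surj_on[OF bij])
  moreover have "pl_dyadic f"
    using B by (rule breakpoint_set_imp_pl_dyadic)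
  ultimately show ?thesis
    unfolding thompsonF_def using id_outside bij cont by blast
qed

lemma thompsonF_id_outside: "f \<in> thompsonF \<Longrightarrow> x \<notin> {0..1} \<Longrightarrow> f x = x"
  and thompsonF_bij: "f \<in> thompsonF \<Longrightarrow> bij_betw f {0..1} {0..1}"
  and thompsonF_continuous: "f \<in> thompsonF \<Longrightarrow> continuous_on {0..1} f"
  by (simp_all add: thompsonF_def)

lemma thompsonF_breakpoint_set: "f \<in> thompsonF \<Longrightarrow> \<exists>B. breakpoint_set f B"
  by (simp add: thompsonF_def pl_dyadic_imp_ex_breakpoint_set)

lemma thompsonF_maps: "f \<in> thompsonF \<Longrightarrow> x \<in> {0..1} \<Longrightarrow> f x \<in> {0..1}"
  by (rule bij_betw_apply[OF thompsonF_bij])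

lemma breakpoint_set_affine_near_ends:
  assumes "breakpoint_set f B"
  obtains \<delta> where "0 < \<delta>" "\<delta> \<le> 1" "dyadic_affine_on f 0 \<delta>" "dyadic_affine_on f (1 - \<delta>) 1"
proof -
  have fin: "finite B" and sub: "B \<subseteq> {0..1}"
    and aff: "\<And>x y. 0 \<le> x \<Longrightarrow> x < y \<Longrightarrow> y \<le> 1 \<Longrightarrow> B \<inter> {x<..<y} = {} \<Longrightarrow> dyadic_affine_on f x y"
    using assms unfolding breakpoint_set_def by blast+
  define D where "D = insert 1 ((\<lambda>b. min b (1 - b)) ` (B - {0, 1}))"
  define \<delta> where "\<delta> = Min D"
  have D: "finite D" "\<forall>d\<in>D. 0 < d"
    using fin sub by (auto simp: D_def)
  then have \<delta>: "0 < \<delta>" "\<delta> \<le> 1"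
    by (auto simp: \<delta>_def D_def)
  have bound: "\<delta> \<le> b \<and> \<delta> \<le> 1 - b" if "b \<in> B - {0, 1}" for b
  proof -
    have "min b (1 - b) \<in> D" using that by (auto simp: D_def)
    then show ?thesis using Min_le[OF D(1)] by (fastforce simp: \<delta>_def)
  qed
  have "b \<notin> {0<..<\<delta>} \<and> b \<notin> {1 - \<delta><..<1}" if "b \<in> B" for b
    using bound[of b] that \<delta> by auto
  then have "B \<inter> {0<..<\<delta>} = {}" "B \<inter> {1 - \<delta><..<1} = {}"
    by blast+
  with \<delta> show thesis
    by (intro that aff) auto
qed

lemma thompsonF_strict_mono: assumes f: "f \<in> thompsonF" shows "strict_mono_on {0..1} f"
proof -
  obtain B where "breakpoint_set f B"
    using thompsonF_breakpoint_set[OF f] by blast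
  then obtain \<delta> k c where \<delta>: "0 < \<delta>" "\<delta> \<le> 1" and kc: "\<forall>z\<in>{0..\<delta>}. f z = 2 powr of_int k * z + c"
    by (auto elim!: breakpoint_set_affine_near_ends simp: dyadic_affine_on_def)
  then have "f 0 < f \<delta>" by simp
  then have "\<not> strict_antimono_on {0..1} f"
    using \<delta> by (auto dest: monotone_onD[of "{0..1}" "(<)" "(>)" f 0 \<delta>])
  moreover have "inj_on f {0..1}"
    using thompsonF_bij[OF f] by (rule bij_betw_imp_inj_on)
  ultimately show ?thesis
    using injective_eq_monotone_map[of "{0..1}" f] thompsonF_continuous[OF f] is_interval_cc by blast
qed

lemma thompsonF_0: assumes f: "f \<in> thompsonF" shows "f 0 = 0"
proof -
  obtain z where z: "z \<in> {0..1}" "f z = 0"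
    using bij_betw_imp_surj_on[OF thompsonF_bij[OF f]] by (metis atLeastAtMost_iff imageE order_refl zero_le_one)
  then have "f 0 \<le> 0"
    using strict_mono_on_leD[OF thompsonF_strict_mono[OF f], of 0 z] by auto
  with thompsonF_maps[OF f, of 0] show ?thesis by auto
qed

lemma thompsonF_1: assumes f: "f \<in> thompsonF" shows "f 1 = 1"
proof -
  obtain z where z: "z \<in> {0..1}" "f z = 1"
    using bij_betw_imp_surj_on[OF thompsonF_bij[OF f]] by (metis atLeastAtMost_iff imageE order_refl zero_le_one)
  then have "1 \<le> f 1"
    using strict_mono_on_leD[OF thompsonF_strict_mono[OF f], of z 1] by auto
  with thompsonF_maps[OF f, of 1] show ?thesis by auto
qed

lemma thompsonF_dyadic:
  assumes f: "f \<in> thompsonF" and x: "x \<in> {0..1}" "dyadic x"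
  shows "dyadic (f x)"
proof -
  obtain bs :: "real list" where len: "length bs \<ge> 2" and sorted: "sorted_wrt (<) bs"
    and hd: "hd bs = 0" and last: "last bs = 1" and dy: "\<forall>b\<in>set bs. dyadic b"
    and pieces: "\<And>i. Suc i < length bs \<Longrightarrow> dyadic_affine_on f (bs ! i) (bs ! Suc i)"
    using f unfolding thompsonF_def pl_dyadic_def dyadic_affine_on_def by blast
  have ne: "bs \<noteq> []" using len by auto
  have step: "dyadic (f z)"
    if i: "Suc i < length bs" "dyadic (f (bs ! i))" and z: "z \<in> {bs ! i..bs ! Suc i}" "dyadic z" for i z
  proof -
    obtain k :: int and c where kc: "\<forall>z\<in>{bs ! i..bs ! Suc i}. f z = 2 powr k * z + c"
      using pieces[OF i(1)] unfolding dyadic_affine_on_def by blast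
    have "bs ! i \<le> bs ! Suc i" using z by simp
    then have "f z = f (bs ! i) + 2 powr k * (z - bs ! i)"
      using kc z by (simp add: algebra_simps)
    then show ?thesis
      using i z dy nth_mem[of i bs] by (simp add: dyadic_add dyadic_diff dyadic_scale)
  qed
  have nodes: "dyadic (f (bs ! i))" if "i < length bs" for i
    using that
  proof (induction i)
    case 0
    then show ?case using hd ne thompsonF_0[OF f] by (simp add: hd_conv_nth)
  next
    case (Suc i)
    have "bs ! i \<le> bs ! Suc i"
      using sorted Suc.prems by (simp add: sorted_wrt_nth_less less_imp_le)
    then show ?case
      using Suc dy step[of i "bs ! Suc i"] by auto
  qed
  show ?thesis
  proof (cases "x < 1")
    case True
    then obtain i where "Suc i < length bs" "bs ! i \<le> x" "x < bs ! Suc i"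
      using ex_consecutive_bracket[OF ne, of x] hd last x by auto
    then show ?thesis
      using step[of i x] nodes[of i] x by auto
  next
    case False
    then have "x = bs ! (length bs - 1)"
      using x last ne by (simp add: last_conv_nth)
    then show ?thesis
      using nodes[of "length bs - 1"] ne by simp
  qed
qed


text \<open>\<^const>\<open>inv_into\<close> is unspecified outside \<open>[0, 1]\<close>; extending by the identity
  keeps the inverse in \<^const>\<open>thompsonF\<close>.\<close>

definition finv :: "(real \<Rightarrow> real) \<Rightarrow> real \<Rightarrow> real" where
  "finv f y = (if y \<in> {0..1} then inv_into {0..1} f y else y)"

lemma finv_f: assumes f: "f \<in> thompsonF" shows "finv f (f x) = x"
proof (cases "x \<in> {0..1}")
  case True
  then show ?thesis
    using thompsonF_maps[OF f] bij_betw_inv_into_left[OF thompsonF_bij[OF f]] by (simp add: finv_def)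
next
  case False
  then show ?thesis
    using thompsonF_id_outside[OF f False] unfolding finv_def by auto
qed

lemma f_finv: assumes f: "f \<in> thompsonF" shows "f (finv f y) = y"
proof (cases "y \<in> {0..1}")
  case True
  then show ?thesis
    using bij_betw_inv_into_right[OF thompsonF_bij[OF f]] by (simp add: finv_def)
next
  case False
  then show ?thesis
    using thompsonF_id_outside[OF f False] unfolding finv_def by auto
qed

lemma finv_maps: "f \<in> thompsonF \<Longrightarrow> y \<in> {0..1} \<Longrightarrow> finv f y \<in> {0..1}"
  using bij_betw_apply[OF bij_betw_inv_into[OF thompsonF_bij]] by (simp add: finv_def)

lemma thompsonF_image_disjoint_iff:
  assumes f: "f \<in> thompsonF" and "B \<subseteq> {0..1}" "x \<in> {0..1}" "y \<in> {0..1}"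
  shows "f ` B \<inter> {f x<..<f y} = {} \<longleftrightarrow> B \<inter> {x<..<y} = {}"
proof -
  have mono: "strict_mono_on {0..1} f"
    using f by (rule thompsonF_strict_mono)
  have "f b \<in> {f x<..<f y} \<longleftrightarrow> b \<in> {x<..<y}" if "b \<in> B" for b
    using that assms strict_mono_on_less[OF mono, of x b] strict_mono_on_less[OF mono, of b y] by auto
  then show ?thesis by blast
qed

lemma breakpoint_set_finv:
  assumes f: "f \<in> thompsonF" and B: "breakpoint_set f B"
  shows "breakpoint_set (finv f) (f ` B)"
proof -
  have mono: "strict_mono_on {0..1} f"
    using f by (rule thompsonF_strict_mono)
  have sub: "B \<subseteq> {0..1}" and ends: "{0, 1} \<subseteq> B" and dy: "\<forall>b\<in>B. dyadic b"
    and aff: "\<And>x y. 0 \<le> x \<Longrightarrow> x < y \<Longrightarrow> y \<le> 1 \<Longrightarrow> B \<inter> {x<..<y} = {} \<Longrightarrow> dyadic_affine_on f x y"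
    using B unfolding breakpoint_set_def by blast+
  have "dyadic_affine_on (finv f) y1 y2"
    if y: "0 \<le> y1" "y1 < y2" "y2 \<le> 1" "f ` B \<inter> {y1<..<y2} = {}" for y1 y2
  proof (rule dyadic_affine_on_inverse)
    define x1 x2 where "x1 = finv f y1" and "x2 = finv f y2"
    have x: "x1 \<in> {0..1}" "x2 \<in> {0..1}" "f x1 = y1" "f x2 = y2"
      using y finv_maps[OF f] f_finv[OF f] by (auto simp: x1_def x2_def)
    show "dyadic_affine_on f x1 x2"
      using aff[of x1 x2] x y strict_mono_on_less[OF mono, of x1 x2]
        thompsonF_image_disjoint_iff[OF f sub, of x1 x2]
      by auto
    show "finv f y \<in> {x1..x2} \<and> f (finv f y) = y" if "y \<in> {y1..y2}" for y
      using that y x strict_mono_on_less_eq[OF mono, of x1 "finv f y"]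
        strict_mono_on_less_eq[OF mono, of "finv f y" x2] finv_maps[OF f, of y] f_finv[OF f, of y]
      by auto
  qed
  moreover have "f ` B \<subseteq> {0..1}" "\<forall>b\<in>f ` B. dyadic b"
    using sub dy thompsonF_maps[OF f] thompsonF_dyadic[OF f] by auto
  moreover have "{0, 1} \<subseteq> f ` B"
    using image_mono[OF ends, of f] thompsonF_0[OF f] thompsonF_1[OF f] by simp
  ultimately show ?thesis
    using B unfolding breakpoint_set_def by blast
qed

lemma finv_thompsonF: assumes f: "f \<in> thompsonF" shows "finv f \<in> thompsonF"
proof -
  have id_outside: "finv f x = x" if "x \<notin> {0..1}" for x
    using that unfolding finv_def by auto
  have bij: "bij_betw (finv f) {0..1} {0..1}"
    using bij_betw_inv_into[OF thompsonF_bij[OF f]] by (rule bij_betw_cong[THEN iffD1, rotated]) (simp add: finv_def)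
  have "continuous_on (f ` {0..1}) (finv f)"
    using thompsonF_continuous[OF f] finv_f[OF f] by (intro continuous_on_inv) auto
  then have cont: "continuous_on {0..1} (finv f)"
    by (simp only: bij_betw_imp_surj_on[OF thompsonF_bij[OF f]])
  obtain B where "breakpoint_set f B"
    using thompsonF_breakpoint_set[OF f] by blast
  then show ?thesis
    using thompsonF_memI[OF id_outside bij cont breakpoint_set_finv[OF f]] by blast
qed

lemma breakpoint_set_comp:
  assumes f: "f \<in> thompsonF" and g: "g \<in> thompsonF"
    and Bf: "breakpoint_set f Bf" and Bg: "breakpoint_set g Bg"
  shows "breakpoint_set (f \<circ> g) (Bg \<union> finv g ` Bf)"
proof -
  have mono: "strict_mono_on {0..1} g"
    using g by (rule thompsonF_strict_mono)
  have fin: "finite Bf" "finite Bg" and sub: "Bf \<subseteq> {0..1}" "Bg \<subseteq> {0..1}"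
    and ends: "{0, 1} \<subseteq> Bg" and dy: "\<forall>b\<in>Bf. dyadic b" "\<forall>b\<in>Bg. dyadic b"
    and aff_f: "\<And>x y. 0 \<le> x \<Longrightarrow> x < y \<Longrightarrow> y \<le> 1 \<Longrightarrow> Bf \<inter> {x<..<y} = {} \<Longrightarrow> dyadic_affine_on f x y"
    and aff_g: "\<And>x y. 0 \<le> x \<Longrightarrow> x < y \<Longrightarrow> y \<le> 1 \<Longrightarrow> Bg \<inter> {x<..<y} = {} \<Longrightarrow> dyadic_affine_on g x y"
    using Bf Bg unfolding breakpoint_set_def by blast+
  have "dyadic_affine_on (f \<circ> g) x y"
    if xy: "0 \<le> x" "x < y" "y \<le> 1" "(Bg \<union> finv g ` Bf) \<inter> {x<..<y} = {}" for x y
  proof (rule dyadic_affine_on_comp)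
    show "dyadic_affine_on g x y"
      using xy by (intro aff_g) auto
    show "mono_on {x..y} g"
      by (rule mono_onI) (use xy strict_mono_on_leD[OF mono] in auto)
    have "g ` finv g ` Bf = Bf"
      by (simp add: image_image f_finv[OF g])
    moreover have "finv g ` Bf \<subseteq> {0..1}"
      using sub finv_maps[OF g] by auto
    ultimately have "Bf \<inter> {g x<..<g y} = {}"
      using xy thompsonF_image_disjoint_iff[OF g, of "finv g ` Bf" x y] by auto
    then show "dyadic_affine_on f (g x) (g y)"
      using xy thompsonF_maps[OF g, of x] thompsonF_maps[OF g, of y] strict_mono_on_less[OF mono, of x y]
      by (intro aff_f) auto
  qed
  moreover have "Bg \<union> finv g ` Bf \<subseteq> {0..1}" "\<forall>b\<in>Bg \<union> finv g ` Bf. dyadic b"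
    using sub dy finv_maps[OF g] thompsonF_dyadic[OF finv_thompsonF[OF g]] by auto
  moreover have "finite (Bg \<union> finv g ` Bf)" "{0, 1} \<subseteq> Bg \<union> finv g ` Bf"
    using fin ends by auto
  ultimately show ?thesis
    unfolding breakpoint_set_def by blast
qed

lemma comp_thompsonF:
  assumes f: "f \<in> thompsonF" and g: "g \<in> thompsonF"
  shows "f \<circ> g \<in> thompsonF"
proof -
  have id_outside: "(f \<circ> g) x = x" if "x \<notin> {0..1}" for x
    using that thompsonF_id_outside[OF f] thompsonF_id_outside[OF g] by simp
  have bij: "bij_betw (f \<circ> g) {0..1} {0..1}"
    using thompsonF_bij[OF g] thompsonF_bij[OF f] by (rule bij_betw_trans)
  have cont: "continuous_on {0..1} (f \<circ> g)"
    using continuous_on_compose[OF thompsonF_continuous[OF g], of f] thompsonF_continuous[OF f]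
      bij_betw_imp_surj_on[OF thompsonF_bij[OF g]] by simp
  obtain Bf Bg where "breakpoint_set f Bf" "breakpoint_set g Bg"
    using thompsonF_breakpoint_set f g by blast
  then show ?thesis
    using thompsonF_memI[OF id_outside bij cont breakpoint_set_comp[OF f g]] by blast
qed

lemma id_thompsonF: "id \<in> thompsonF"
proof (rule thompsonF_memI)
  have "dyadic_affine_on id x y" for x y
    unfolding dyadic_affine_on_def by (rule exI[of _ 0], rule exI[of _ 0]) simp
  then show "breakpoint_set id {0, 1}"
    unfolding breakpoint_set_def by auto
qed (simp_all add: continuous_on_id)

lemma thompsonG_simps [simp]:
  "carrier thompsonG = thompsonF" "f \<otimes>\<^bsub>thompsonG\<^esub> g = f \<circ> g" "\<one>\<^bsub>thompsonG\<^esub> = id"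
  by (simp_all add: thompsonG_def)

lemma thompsonG_group: "group thompsonG"
proof (rule groupI)
  show "\<exists>g\<in>carrier thompsonG. g \<otimes>\<^bsub>thompsonG\<^esub> f = \<one>\<^bsub>thompsonG\<^esub>" if "f \<in> carrier thompsonG" for f
    using that finv_thompsonF finv_f by (auto intro!: bexI[of _ "finv f"])
qed (auto simp: comp_thompsonF id_thompsonF comp_assoc)

lemma thompsonG_inv: assumes f: "f \<in> thompsonF" shows "inv\<^bsub>thompsonG\<^esub> f = finv f"
  using group.inv_equality[OF thompsonG_group, of "finv f" f] finv_f[OF f] finv_thompsonF[OF f]
  by (simp add: f comp_def id_def)

section \<open>Germs at the endpoints\<close>

definition slope_at :: "real \<Rightarrow> (real \<Rightarrow> real) \<Rightarrow> int \<Rightarrow> bool" where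
  "slope_at p f k \<longleftrightarrow> (\<exists>\<delta>>0. \<forall>x\<in>{0..1}. \<bar>x - p\<bar> < \<delta> \<longrightarrow> f x = p + 2 powr k * (x - p))"

lemma slope_at_id: "slope_at p id 0"
  unfolding slope_at_def by (auto intro: exI[of _ 1])

lemma slope_at_comp:
  assumes f: "slope_at p f k" and g: "slope_at p g l" and maps: "\<And>x. x \<in> {0..1} \<Longrightarrow> g x \<in> {0..1}"
  shows "slope_at p (f \<circ> g) (k + l)"
proof -
  obtain \<delta>f where \<delta>f: "\<delta>f > 0" "\<And>x. x \<in> {0..1} \<Longrightarrow> \<bar>x - p\<bar> < \<delta>f \<Longrightarrow> f x = p + 2 powr k * (x - p)"
    using f unfolding slope_at_def by blast
  obtain \<delta>g where \<delta>g: "\<delta>g > 0" "\<And>x. x \<in> {0..1} \<Longrightarrow> \<bar>x - p\<bar> < \<delta>g \<Longrightarrow> g x = p + 2 powr l * (x - p)"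
    using g unfolding slope_at_def by blast
  define \<delta> where "\<delta> = min \<delta>g (\<delta>f / 2 powr l)"
  have "(f \<circ> g) x = p + 2 powr of_int (k + l) * (x - p)" if x: "x \<in> {0..1}" "\<bar>x - p\<bar> < \<delta>" for x
  proof -
    have gx: "g x = p + 2 powr l * (x - p)"
      using x \<delta>g by (simp add: \<delta>_def)
    have "\<bar>g x - p\<bar> = 2 powr l * \<bar>x - p\<bar>"
      by (simp add: gx abs_mult)
    also have "\<dots> < \<delta>f"
      using x by (simp add: \<delta>_def field_simps)
    finally show ?thesis
      using \<delta>f(2)[of "g x"] maps[OF x(1)] by (simp add: gx powr_add)
  qed
  moreover have "\<delta> > 0"
    using \<delta>f \<delta>g by (simp add: \<delta>_def)
  ultimately show ?thesis
    unfolding slope_at_def by blast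
qed

lemma slope_at_unique:
  assumes p: "p \<in> {0..1}" and k: "slope_at p f k" and l: "slope_at p f l"
  shows "k = l"
proof -
  obtain \<delta>k \<delta>l where \<delta>: "\<delta>k > 0" "\<delta>l > 0"
    and kl: "\<And>x. x \<in> {0..1} \<Longrightarrow> \<bar>x - p\<bar> < \<delta>k \<Longrightarrow> f x = p + 2 powr k * (x - p)"
      "\<And>x. x \<in> {0..1} \<Longrightarrow> \<bar>x - p\<bar> < \<delta>l \<Longrightarrow> f x = p + 2 powr l * (x - p)"
    using k l unfolding slope_at_def by blast
  define d where "d = min (min \<delta>k \<delta>l) 1 / 2"
  define x where "x = (if p < 1 then p + min d (1 - p) else p - d)"
  have "x \<in> {0..1}" "\<bar>x - p\<bar> < \<delta>k" "\<bar>x - p\<bar> < \<delta>l" "x \<noteq> p"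
    using p \<delta> by (auto simp: x_def d_def)
  then have "2 powr k * (x - p) = 2 powr l * (x - p)" "x - p \<noteq> 0"
    using kl[of x] by auto
  then have "2 powr k = 2 powr l"
    by simp
  then show "k = l"
    using powr_inj[of 2 "of_int k" "of_int l"] by simp
qed

lemma thompsonF_slope_at:
  assumes f: "f \<in> thompsonF" and p: "p \<in> {0, 1}"
  obtains k where "slope_at p f k"
proof -
  obtain B where "breakpoint_set f B"
    using thompsonF_breakpoint_set[OF f] by blast
  then obtain \<delta> where \<delta>: "0 < \<delta>" "\<delta> \<le> 1"
    and aff: "dyadic_affine_on f 0 \<delta>" "dyadic_affine_on f (1 - \<delta>) 1"
    by (rule breakpoint_set_affine_near_ends)
  define a where "a = (if p = 0 then 0 else 1 - \<delta>)"
  have ap: "{x \<in> {0..1}. \<bar>x - p\<bar> < \<delta>} \<subseteq> {a..a + \<delta>}" "p \<in> {a..a + \<delta>}"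
    using p \<delta> by (auto simp: a_def)
  obtain k :: int and c where kc: "\<forall>z\<in>{a..a + \<delta>}. f z = 2 powr k * z + c"
    using aff unfolding dyadic_affine_on_def a_def by (cases "p = 0") auto
  have "f p = p"
    using p thompsonF_0[OF f] thompsonF_1[OF f] by auto
  then have c: "c = p - 2 powr k * p"
    using kc ap(2) by auto
  have "f x = p + 2 powr k * (x - p)" if "x \<in> {0..1}" "\<bar>x - p\<bar> < \<delta>" for x
  proof -
    have "x \<in> {a..a + \<delta>}"
      using ap(1) that by blast
    then show ?thesis
      using kc c by (simp add: algebra_simps)
  qed
  then have "slope_at p f k"
    unfolding slope_at_def using \<delta>(1) by blast
  then show thesis ..
qed

lemma slope_at_finv:
  assumes f: "f \<in> thompsonF" and p: "p \<in> {0, 1}" and k: "slope_at p f k"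
  shows "slope_at p (finv f) (- k)"
proof -
  obtain l where l: "slope_at p (finv f) l"
    using thompsonF_slope_at[OF finv_thompsonF[OF f] p] .
  have "f \<circ> finv f = id"
    using f_finv[OF f] by auto
  then have "slope_at p id (k + l)"
    using slope_at_comp[OF k l finv_maps[OF f]] by simp
  then have "k + l = 0"
    using slope_at_unique[of p id "k + l" 0] slope_at_id p by auto
  then have "l = - k" by simp
  then show ?thesis
    using l by simp
qed

definition trivial_germs :: "(real \<Rightarrow> real) set" where
  "trivial_germs = {f \<in> thompsonF. slope_at 0 f 0 \<and> slope_at 1 f 0}"

lemma trivial_germs_subgroup: "subgroup trivial_germs thompsonG"
proof
  show "trivial_germs \<subseteq> carrier thompsonG" "\<one>\<^bsub>thompsonG\<^esub> \<in> trivial_germs"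
    by (auto simp: trivial_germs_def id_thompsonF slope_at_id)
  show "f \<otimes>\<^bsub>thompsonG\<^esub> g \<in> trivial_germs" if "f \<in> trivial_germs" "g \<in> trivial_germs" for f g
    using that slope_at_comp[of _ f 0 g 0] comp_thompsonF thompsonF_maps
    by (auto simp: trivial_germs_def)
  show "inv\<^bsub>thompsonG\<^esub> f \<in> trivial_germs" if "f \<in> trivial_germs" for f
    using that slope_at_finv[of f _ 0] finv_thompsonF thompsonG_inv
    by (auto simp: trivial_germs_def)
qed

lemma commutator_trivial_germs:
  assumes a: "a \<in> thompsonF" and b: "b \<in> thompsonF"
  shows "a \<circ> b \<circ> finv a \<circ> finv b \<in> trivial_germs"
proof -
  let ?c = "a \<circ> b \<circ> finv a \<circ> finv b"
  have "slope_at p ?c 0" if p: "p \<in> {0, 1}" for p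
  proof -
    obtain k l where k: "slope_at p a k" and l: "slope_at p b l"
      using thompsonF_slope_at[OF a p] thompsonF_slope_at[OF b p] by metis
    have "slope_at p (a \<circ> b) (k + l)"
      using k l thompsonF_maps[OF b] by (rule slope_at_comp)
    then have "slope_at p (a \<circ> b \<circ> finv a) (k + l + - k)"
      using slope_at_finv[OF a p k] finv_maps[OF a] by (rule slope_at_comp)
    then have "slope_at p ?c (k + l + - k + - l)"
      using slope_at_finv[OF b p l] finv_maps[OF b] by (rule slope_at_comp)
    then show ?thesis by simp
  qed
  moreover have "?c \<in> thompsonF"
    using a b by (intro comp_thompsonF finv_thompsonF)
  ultimately show ?thesis
    by (simp add: trivial_germs_def)
qed

lemma derived_trivial_germs: "derived thompsonG (carrier thompsonG) \<subseteq> trivial_germs"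
  unfolding derived_def
  by (rule group.generate_subgroup_incl[OF thompsonG_group _ trivial_germs_subgroup])
    (auto simp: thompsonG_inv commutator_trivial_germs)

section \<open>Binary words and dyadic cells\<close>

definition fin_word_val :: "bool list \<Rightarrow> real" where
  "fin_word_val u = (\<Sum>n<length u. (if u ! n then 1 else 0) / 2 ^ Suc n)"

definition dyadic_cell :: "bool list \<Rightarrow> real set" where
  "dyadic_cell u = {fin_word_val u .. fin_word_val u + 1 / 2 ^ length u}"

definition mixed :: "bool list \<Rightarrow> bool" where
  "mixed u \<longleftrightarrow> True \<in> set u \<and> False \<in> set u"

lemma fin_word_val_snoc:
  "fin_word_val (u @ [b]) = fin_word_val u + (if b then 1 else 0) / 2 ^ Suc (length u)"
  unfolding fin_word_val_def by (simp add: nth_append)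

lemma fin_word_val_bounds: "0 \<le> fin_word_val u" "fin_word_val u + 1 / 2 ^ length u \<le> 1"
proof -
  show "0 \<le> fin_word_val u"
    unfolding fin_word_val_def by (intro sum_nonneg) simp
  show "fin_word_val u + 1 / 2 ^ length u \<le> 1"
  proof (induction u rule: rev_induct)
    case Nil
    then show ?case by (simp add: fin_word_val_def)
  next
    case (snoc b u)
    have "fin_word_val (u @ [b]) + 1 / 2 ^ length (u @ [b]) \<le> fin_word_val u + 1 / 2 ^ length u"
      by (cases b) (simp_all add: fin_word_val_snoc field_simps)
    with snoc show ?case by simp
  qed
qed

lemma fin_word_val_Ints: "fin_word_val u * 2 ^ length u \<in> \<int>"
proof (induction u rule: rev_induct)
  case Nil
  then show ?case by (simp add: fin_word_val_def)
next
  case (snoc b u)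
  have "fin_word_val (u @ [b]) * 2 ^ length (u @ [b]) = 2 * (fin_word_val u * 2 ^ length u) + (if b then 1 else 0)"
    by (simp add: fin_word_val_snoc field_simps)
  then show ?case
    using snoc by simp
qed

lemma ex_word_fin_word_val:
  "j < 2 ^ m \<Longrightarrow> \<exists>u. length u = m \<and> fin_word_val u = real j / 2 ^ m"
proof (induction m arbitrary: j)
  case 0
  then show ?case by (simp add: fin_word_val_def)
next
  case (Suc m)
  have "j div 2 < 2 ^ m"
    using Suc.prems by (intro less_mult_imp_div_less) (simp add: power_Suc2)
  then obtain u where u: "length u = m" "fin_word_val u = real (j div 2) / 2 ^ m"
    using Suc.IH by blast
  have j: "j = 2 * (j div 2) + (if odd j then 1 else 0)"
    by presburger
  have "real j = 2 * real (j div 2) + (if odd j then 1 else 0)"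
    by (subst (1) j) simp
  then have "fin_word_val (u @ [odd j]) = real j / 2 ^ Suc m"
    using u by (simp add: fin_word_val_snoc field_simps)
  then show ?case
    using u by (intro exI[of _ "u @ [odd j]"]) simp
qed

lemma mixedI:
  assumes "0 < fin_word_val u" and "fin_word_val u + 1 / 2 ^ length u < 1"
  shows "mixed u"
proof -
  have "fin_word_val u = 0" if "True \<notin> set u"
    using that unfolding fin_word_val_def by (intro sum.neutral) (auto simp: in_set_conv_nth)
  moreover have "fin_word_val u + 1 / 2 ^ length u = 1" if "False \<notin> set u"
    using that
  proof (induction u rule: rev_induct)
    case Nil
    then show ?case by (simp add: fin_word_val_def)
  next
    case (snoc b u)
    then have "fin_word_val (u @ [b]) + 1 / 2 ^ length (u @ [b]) = fin_word_val u + 1 / 2 ^ length u"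
      by (simp add: fin_word_val_snoc field_simps)
    with snoc show ?case by simp
  qed
  ultimately show ?thesis
    using assms unfolding mixed_def by force
qed

lemma mixed_split:
  assumes "mixed u"
  obtains a r w where "r \<ge> 1" "u = replicate r a @ (\<not> a) # w"
proof -
  obtain a u' where u_Cons: "u = a # u'"
    using assms by (cases u) (auto simp: mixed_def)
  obtain ys w where split: "u = ys @ (\<not> a) # w" and ys: "(\<not> a) \<notin> set ys"
    using assms split_list_first[of "\<not> a" u] by (cases a) (auto simp: mixed_def)
  have "\<forall>y\<in>set ys. y = a"
  proof
    fix y assume "y \<in> set ys"
    with ys show "y = a" by (cases y; cases a) auto
  qed
  then have "ys = replicate (length ys) a"
    by (simp add: replicate_length_same)
  moreover have "length ys \<ge> 1"
    using split u_Cons by (cases ys) auto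
  ultimately show thesis
    using that split by metis
qed

lemma word_val_summable: "summable (\<lambda>n. (if \<alpha> n then 1 else 0) / 2 ^ Suc n :: real)"
proof (rule summable_comparison_test)
  show "summable (\<lambda>n. (1 / 2 :: real) ^ Suc n)"
    using power_half_series by (rule sums_summable)
  show "\<exists>N. \<forall>n\<ge>N. norm ((if \<alpha> n then 1 else 0) / 2 ^ Suc n :: real) \<le> (1 / 2) ^ Suc n"
    by (intro exI[of _ 0]) (simp add: power_one_over)
qed

lemma word_val_const: "word_val (\<lambda>_. False) = 0" "word_val (\<lambda>_. True) = 1"
  unfolding word_val_def using power_half_series by (simp_all add: sums_iff power_one_over)

lemma word_val_bounds: "word_val \<alpha> \<in> {0..1}"
proof -
  have "word_val \<alpha> \<le> word_val (\<lambda>_. True)"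
    unfolding word_val_def by (intro suminf_le word_val_summable) auto
  moreover have "0 \<le> word_val \<alpha>"
    unfolding word_val_def by (intro suminf_nonneg word_val_summable) simp
  ultimately show ?thesis
    by (simp add: word_val_const)
qed

lemma word_val_prepend: "word_val (prepend u \<alpha>) = fin_word_val u + word_val \<alpha> / 2 ^ length u"
proof -
  let ?f = "\<lambda>n. (if prepend u \<alpha> n then 1 else 0) / 2 ^ Suc n :: real"
  have "word_val (prepend u \<alpha>) = (\<Sum>n. ?f (n + length u)) + (\<Sum>n<length u. ?f n)"
    unfolding word_val_def by (rule suminf_split_initial_segment[OF word_val_summable])
  also have "(\<Sum>n<length u. ?f n) = fin_word_val u"
    unfolding fin_word_val_def prepend_def by simp
  also have "(\<Sum>n. ?f (n + length u)) = (\<Sum>n. (if \<alpha> n then 1 else 0) / 2 ^ Suc n / 2 ^ length u)"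
    by (simp add: prepend_def power_add mult_ac)
  also have "\<dots> = word_val \<alpha> / 2 ^ length u"
    unfolding word_val_def by (rule suminf_divide[OF word_val_summable])
  finally show ?thesis by simp
qed

lemma floor_double: "\<lfloor>2 * t\<rfloor> = 2 * \<lfloor>t\<rfloor> + (if odd \<lfloor>2 * t\<rfloor> then 1 else 0)"
  for t :: real
proof -
  have "\<lfloor>2 * t\<rfloor> = 2 * \<lfloor>t\<rfloor> \<or> \<lfloor>2 * t\<rfloor> = 2 * \<lfloor>t\<rfloor> + 1"
    by linarith
  then show ?thesis by auto
qed

lemma word_val_surj: assumes x: "x \<in> {0..1}" shows "\<exists>\<alpha>. word_val \<alpha> = x"
proof (cases "x = 1")
  case True
  then show ?thesis using word_val_const by blast
next
  case False
  with x have x01: "0 \<le> x" "x < 1" by auto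
  define \<alpha> where "\<alpha> n \<longleftrightarrow> odd \<lfloor>x * 2 ^ Suc n\<rfloor>" for n
  have partial: "(\<Sum>n<N. (if \<alpha> n then 1 else 0) / 2 ^ Suc n :: real) = of_int \<lfloor>x * 2 ^ N\<rfloor> / 2 ^ N" for N
  proof (induction N)
    case 0
    have "\<lfloor>x\<rfloor> = 0"
      using x01 by (simp add: floor_eq_iff)
    then show ?case by simp
  next
    case (Suc N)
    have "\<lfloor>x * 2 ^ Suc N\<rfloor> = 2 * \<lfloor>x * 2 ^ N\<rfloor> + (if \<alpha> N then 1 else 0)"
      using floor_double[of "x * 2 ^ N"] unfolding \<alpha>_def by (simp add: algebra_simps)
    then show ?case
      using Suc by (simp add: field_simps)
  qed
  have "(\<lambda>N. of_int \<lfloor>x * 2 ^ N\<rfloor> / 2 ^ N) \<longlonglongrightarrow> x"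
  proof (rule tendsto_sandwich[of "\<lambda>N. x - (1 / 2) ^ N" _ _ "\<lambda>_. x"])
    show "\<forall>\<^sub>F N in sequentially. x - (1 / 2) ^ N \<le> of_int \<lfloor>x * 2 ^ N\<rfloor> / 2 ^ N"
    proof (intro always_eventually allI)
      fix N :: nat
      have "(x * 2 ^ N - 1) / 2 ^ N \<le> of_int \<lfloor>x * 2 ^ N\<rfloor> / 2 ^ N"
        by (intro divide_right_mono) (linarith, simp)
      then show "x - (1 / 2) ^ N \<le> of_int \<lfloor>x * 2 ^ N\<rfloor> / 2 ^ N"
        by (simp add: diff_divide_distrib power_one_over)
    qed
    show "\<forall>\<^sub>F N in sequentially. of_int \<lfloor>x * 2 ^ N\<rfloor> / 2 ^ N \<le> x"
      by (intro always_eventually allI) (simp add: field_simps)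
    show "(\<lambda>N. x - (1 / 2) ^ N) \<longlonglongrightarrow> x"
      by (intro tendsto_eq_intros LIMSEQ_realpow_zero) auto
  qed simp
  then have "(\<lambda>n. (if \<alpha> n then 1 else 0) / 2 ^ Suc n :: real) sums x"
    unfolding sums_def partial .
  then have "word_val \<alpha> = x"
    unfolding word_val_def by (rule sums_unique[symmetric])
  then show ?thesis by blast
qed

lemma dyadic_cell_eq_image: "dyadic_cell u = range (\<lambda>\<alpha>. word_val (prepend u \<alpha>))"
proof (intro equalityI subsetI)
  fix x assume "x \<in> dyadic_cell u"
  then have "(x - fin_word_val u) * 2 ^ length u \<in> {0..1}"
    by (auto simp: dyadic_cell_def field_simps)
  then obtain \<alpha> where "word_val \<alpha> = (x - fin_word_val u) * 2 ^ length u"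
    using word_val_surj by blast
  then have "x = word_val (prepend u \<alpha>)"
    by (simp add: word_val_prepend)
  then show "x \<in> range (\<lambda>\<alpha>. word_val (prepend u \<alpha>))" by simp
next
  fix x assume "x \<in> range (\<lambda>\<alpha>. word_val (prepend u \<alpha>))"
  then show "x \<in> dyadic_cell u"
    using word_val_bounds by (auto simp: dyadic_cell_def word_val_prepend divide_right_mono)
qed

lemma has_branches_ends:
  assumes "has_branches f u v"
  shows "f (fin_word_val u) = fin_word_val v"
    and "f (fin_word_val u + 1 / 2 ^ length u) = fin_word_val v + 1 / 2 ^ length v"
  using assms[unfolded has_branches_def, rule_format, of "\<lambda>_. False"]
    assms[unfolded has_branches_def, rule_format, of "\<lambda>_. True"]
  by (simp_all add: word_val_prepend word_val_const)

lemma has_branches_agree: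
  "has_branches f u v \<Longrightarrow> has_branches g u v \<Longrightarrow> x \<in> dyadic_cell u \<Longrightarrow> f x = g x"
  unfolding dyadic_cell_eq_image has_branches_def by auto

section \<open>The relation \<open>sim H\<close>\<close>

context
  fixes H assumes H: "subgroup H thompsonG"
begin

lemma sim_refl: "sim H u u"
proof -
  have "id \<in> H"
    using subgroup.one_closed[OF H] by simp
  then show ?thesis
    unfolding sim_def has_branches_def by (intro bexI[of _ id]) simp_all
qed

lemma sim_sym: "sim H u v \<Longrightarrow> sim H v u"
proof -
  assume "sim H u v"
  then obtain h where h: "h \<in> H" "has_branches h u v"
    unfolding sim_def by blast
  have hF: "h \<in> thompsonF"
    using subgroup.subset[OF H] h(1) by auto
  have "finv h \<in> H"
    using subgroup.m_inv_closed[OF H h(1)] thompsonG_inv[OF hF] by simp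
  moreover have "has_branches (finv h) v u"
    using h(2) finv_f[OF hF] unfolding has_branches_def by metis
  ultimately show "sim H v u"
    unfolding sim_def by blast
qed

lemma sim_trans: "sim H u v \<Longrightarrow> sim H v w \<Longrightarrow> sim H u w"
proof -
  assume "sim H u v" "sim H v w"
  then obtain h g where "h \<in> H" "has_branches h u v" "g \<in> H" "has_branches g v w"
    unfolding sim_def by blast
  then have "g \<circ> h \<in> H" "has_branches (g \<circ> h) u w"
    using subgroup.m_closed[OF H, of g h] unfolding has_branches_def by auto
  then show "sim H u w"
    unfolding sim_def by blast
qed

lemma sim_append: "sim H u v \<Longrightarrow> sim H (u @ w) (v @ w)"
proof -
  have "prepend (u @ w) \<alpha> = prepend u (prepend w \<alpha>)" for u \<alpha>
    unfolding prepend_def by (auto simp: nth_append)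
  then show "sim H u v \<Longrightarrow> sim H (u @ w) (v @ w)"
    unfolding sim_def has_branches_def by auto
qed

lemma sim_01_append:
  assumes h3: "sim H [False, True] [True, False]"
    and h4: "sim H [True, False] [False, True, False]"
    and h5: "sim H [False, True, False] [False, True, True]"
  shows "sim H ([False, True] @ w) [False, True]"
proof (induction w rule: rev_induct)
  case Nil
  then show ?case by (simp add: sim_refl)
next
  case (snoc b w)
  have "sim H [False, True, False] [False, True]"
    using h3 h4 by (meson sim_sym sim_trans)
  moreover have "sim H [False, True, True] [False, True]"
    using h5 calculation by (meson sim_sym sim_trans)
  ultimately have "sim H ([False, True] @ [b]) [False, True]"
    by (cases b) simp_all
  then show ?case
    using sim_append[OF snoc.IH, of "[b]"] by (metis append_assoc sim_trans)
qed

lemma mixed_sim_01: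
  assumes h1: "\<And>r::nat. r \<ge> 1 \<Longrightarrow> sim H (replicate r True @ [False]) [True, False]"
    and h2: "\<And>s::nat. s \<ge> 1 \<Longrightarrow> sim H (replicate s False @ [True]) [False, True]"
    and h3: "sim H [False, True] [True, False]"
    and h4: "sim H [True, False] [False, True, False]"
    and h5: "sim H [False, True, False] [False, True, True]"
    and u: "mixed u"
  shows "sim H u [False, True]"
proof -
  obtain a r w where r: "r \<ge> 1" and split: "u = replicate r a @ (\<not> a) # w"
    using mixed_split[OF u] by blast
  then have "sim H u ([False, True] @ w)"
    using sim_append[OF h1[OF r], of w] sim_append[OF h2[OF r], of w] sim_append[OF sim_sym[OF h3], of w]
    by (cases a) (auto intro: sim_trans)
  then show ?thesis
    using sim_01_append[OF h3 h4 h5] sim_trans by blast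
qed

end

lemma mixed_words_sim:
  assumes H: "subgroup H thompsonG"
    and h1: "\<And>r::nat. r \<ge> 1 \<Longrightarrow> sim H (replicate r True @ [False]) [True, False]"
    and h2: "\<And>s::nat. s \<ge> 1 \<Longrightarrow> sim H (replicate s False @ [True]) [False, True]"
    and h3: "sim H [False, True] [True, False]"
    and h4: "sim H [True, False] [False, True, False]"
    and h5: "sim H [False, True, False] [False, True, True]"
    and "mixed u" "mixed v"
  shows "sim H u v"
  using mixed_sim_01[OF H h1 h2 h3 h4 h5] assms(7,8) sim_sym[OF H] sim_trans[OF H] by blast

section \<open>Fine dyadic cells\<close>

lemma Ints_less_imp_add_one_le: "a \<in> \<int> \<Longrightarrow> b \<in> \<int> \<Longrightarrow> a < b \<Longrightarrow> a + 1 \<le> b"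
  for a b :: real
  by (auto elim!: Ints_cases)

lemma dyadic_eventually_Ints_shift:
  assumes "dyadic c"
  shows "\<forall>\<^sub>F M in sequentially. \<exists>m. int M = k + int m \<and> c * 2 ^ m \<in> \<int>"
proof -
  obtain N where N: "\<And>m. m \<ge> N \<Longrightarrow> c * 2 ^ m \<in> \<int>"
    using assms unfolding dyadic_iff_eventually_Ints eventually_sequentially by blast
  have "\<exists>m. int M = k + int m \<and> c * 2 ^ m \<in> \<int>" if "M \<ge> nat (k + int N)" for M
    using that N[of "nat (int M - k)"] by (intro exI[of _ "nat (int M - k)"]) auto
  then show ?thesis
    unfolding eventually_sequentially by blast
qed

lemma ex_word_fin_word_val_Ints:
  assumes y: "y * 2 ^ m \<in> \<int>" "0 \<le> y" "y + 1 / 2 ^ m \<le> 1"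
  shows "\<exists>v. length v = m \<and> fin_word_val v = y"
proof -
  obtain a :: int where a: "y * 2 ^ m = of_int a"
    using y(1) by (auto elim!: Ints_cases)
  have "0 \<le> y * 2 ^ m"
    using y(2) by simp
  then have "0 \<le> a"
    by (simp add: a)
  have "of_int (a + 1) = (y + 1 / 2 ^ m) * 2 ^ m"
    using a by (simp add: field_simps)
  also have "\<dots> \<le> of_int (2 ^ m)"
    using y(3) by simp
  finally have a_less: "nat a < 2 ^ m"
    using \<open>0 \<le> a\<close> by (simp only: of_int_le_iff) (simp add: nat_less_iff)
  obtain v where v: "length v = m" "fin_word_val v = real (nat a) / 2 ^ m"
    using ex_word_fin_word_val[OF a_less] by blast
  moreover have "real (nat a) / 2 ^ m = y"
    using a \<open>0 \<le> a\<close> by (simp add: field_simps)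
  ultimately show ?thesis by auto
qed

lemma dyadic_cell_subset_unit: "dyadic_cell u \<subseteq> {0..1}"
  using fin_word_val_bounds[of u] by (auto simp: dyadic_cell_def)

lemma powr_int_eq_power_divide:
  fixes b :: real
  assumes "0 < b" and "int M = k + int m"
  shows "b powr of_int k = b ^ M / b ^ m"
proof -
  have "real_of_int (k + int m) = real M"
    using assms(2) by simp
  have "b powr of_int k * b ^ m = b powr real_of_int (k + int m)"
    using assms(1) by (simp add: powr_add powr_realpow)
  also have "\<dots> = b ^ M"
    using \<open>real_of_int (k + int m) = real M\<close> assms(1) by (simp add: powr_realpow)
  finally show ?thesis
    using assms(1) by (simp add: field_simps)
qed

lemma has_branches_if_affine:
  assumes aff: "\<forall>x\<in>dyadic_cell u. f x = 2 powr k * x + c"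
    and M: "int (length u) = k + int m" and c: "c * 2 ^ m \<in> \<int>"
    and range: "f ` dyadic_cell u \<subseteq> {0..1}"
  shows "\<exists>v. length v = m \<and> has_branches f u v"
proof -
  define M x0 where "M = length u" and "x0 = fin_word_val u"
  have scale: "2 powr k = 2 ^ M / 2 ^ m"
    using powr_int_eq_power_divide[of 2 M k m] M by (simp add: M_def)
  have cell: "x0 + t / 2 ^ M \<in> dyadic_cell u" if "t \<in> {0..1}" for t
    using that by (auto simp: dyadic_cell_def x0_def M_def divide_right_mono)
  have fx0: "f x0 = 2 powr k * x0 + c"
    using aff cell[of 0] by simp
  have shift: "f (x0 + t / 2 ^ M) = f x0 + t / 2 ^ m" if "t \<in> {0..1}" for t
  proof -
    have "f (x0 + t / 2 ^ M) = 2 powr k * (x0 + t / 2 ^ M) + c"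
      using aff cell[OF that] by blast
    also have "\<dots> = f x0 + 2 powr k * t / 2 ^ M"
      by (simp add: fx0 algebra_simps)
    also have "2 powr k * t / 2 ^ M = t / 2 ^ m"
      by (simp add: scale)
    finally show ?thesis .
  qed
  have "f x0 * 2 ^ m = x0 * 2 ^ M + c * 2 ^ m"
    by (simp add: fx0 scale field_simps)
  then have "f x0 * 2 ^ m \<in> \<int>"
    using fin_word_val_Ints[of u] c by (simp add: x0_def M_def)
  moreover have "0 \<le> f x0" "f x0 + 1 / 2 ^ m \<le> 1"
    using range cell[of 0] cell[of 1] shift[of 1] by auto
  ultimately have "\<exists>v. length v = m \<and> fin_word_val v = f x0"
    by (rule ex_word_fin_word_val_Ints)
  then obtain v where v: "length v = m" "fin_word_val v = f x0"
    by blast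
  have "f (word_val (prepend u \<alpha>)) = word_val (prepend v \<alpha>)" for \<alpha>
  proof -
    have "f (word_val (prepend u \<alpha>)) = f (x0 + word_val \<alpha> / 2 ^ M)"
      by (simp add: word_val_prepend x0_def M_def)
    also have "\<dots> = f x0 + word_val \<alpha> / 2 ^ m"
      by (rule shift[OF word_val_bounds])
    also have "\<dots> = word_val (prepend v \<alpha>)"
      using v by (simp add: word_val_prepend)
    finally show ?thesis .
  qed
  then have "has_branches f u v"
    unfolding has_branches_def by blast
  with v show ?thesis by blast
qed

lemma dyadic_cell_subset_piece:
  fixes bs :: "real list"
  assumes ne: "bs \<noteq> []" and hd: "hd bs = 0" and last: "last bs = 1"
    and grid: "\<forall>b\<in>set bs. b * 2 ^ length u \<in> \<int>"
  obtains i where "Suc i < length bs" "dyadic_cell u \<subseteq> {bs ! i .. bs ! Suc i}"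
proof -
  define M x0 where "M = length u" and "x0 = fin_word_val u"
  have x0: "0 \<le> x0" "x0 + 1 / 2 ^ M \<le> 1" "x0 * 2 ^ M \<in> \<int>"
    using fin_word_val_bounds[of u] fin_word_val_Ints[of u] by (simp_all add: x0_def M_def)
  moreover have "(0::real) < 1 / 2 ^ M"
    by simp
  ultimately have "x0 < 1"
    by linarith
  then obtain i where i: "Suc i < length bs" "bs ! i \<le> x0" "x0 < bs ! Suc i"
    using ex_consecutive_bracket[OF ne, of x0] hd last x0 by auto
  have "x0 * 2 ^ M + 1 \<le> bs ! Suc i * 2 ^ M"
    using Ints_less_imp_add_one_le[of "x0 * 2 ^ M" "bs ! Suc i * 2 ^ M"] grid x0(3) i
    by (simp add: M_def nth_mem)
  then have "x0 + 1 / 2 ^ M \<le> bs ! Suc i"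
    by (simp add: field_simps)
  then have "dyadic_cell u \<subseteq> {bs ! i .. bs ! Suc i}"
    using i by (auto simp: dyadic_cell_def x0_def M_def)
  with i(1) show thesis ..
qed

lemma thompsonF_intercept_dyadic:
  fixes k :: int
  assumes f: "f \<in> thompsonF" and a: "a \<in> {0..1}" "dyadic a" "a \<le> b"
    and kc: "\<forall>x\<in>{a..b}. f x = 2 powr k * x + c"
  shows "dyadic c"
proof -
  have "c = f a - 2 powr k * a"
    using kc a(3) by simp
  then show ?thesis
    using thompsonF_dyadic[OF f a(1,2)] a(2) by (simp add: dyadic_diff dyadic_scale)
qed

text \<open>\<open>M\<close> must be large enough that the grid \<open>2\<^sup>-\<^sup>M\<close> contains all breakpoints of \<open>f\<close>
  and that every intercept \<open>c\<close> of a piece \<open>2\<^sup>k x + c\<close> satisfies \<open>c 2\<^sup>M\<^sup>-\<^sup>k \<in> \<int>\<close>.\<close>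

lemma thompsonF_eventually_has_branches:
  assumes f: "f \<in> thompsonF"
  shows "\<forall>\<^sub>F M in sequentially. \<forall>u. length u = M \<longrightarrow> (\<exists>v. has_branches f u v)"
proof -
  have "pl_dyadic f"
    using f by (simp add: thompsonF_def)
  then obtain bs :: "real list" where len: "length bs \<ge> 2" and sorted: "sorted_wrt (<) bs"
    and hd: "hd bs = 0" and last: "last bs = 1" and dy: "\<forall>b\<in>set bs. dyadic b"
    and pieces: "\<And>i. Suc i < length bs \<Longrightarrow>
      \<exists>(k::int) c. \<forall>x\<in>{bs ! i .. bs ! Suc i}. f x = 2 powr k * x + c"
    unfolding pl_dyadic_def by blast
  have ne: "bs \<noteq> []"
    using len by auto
  have bs01: "set bs \<subseteq> {0..1}"
    using sorted_set_subset_hd_last[OF strict_sorted_imp_sorted[OF sorted] ne] hd last by simp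
  have "\<forall>\<^sub>F M in sequentially. \<exists>(k::int) c m. (\<forall>x\<in>{bs ! i .. bs ! Suc i}. f x = 2 powr k * x + c) \<and>
      int M = k + int m \<and> c * 2 ^ m \<in> \<int>" if i: "Suc i < length bs" for i
  proof -
    obtain k :: int and c where kc: "\<forall>x\<in>{bs ! i .. bs ! Suc i}. f x = 2 powr k * x + c"
      using pieces[OF i] by blast
    have "bs ! i \<in> {0..1}" "dyadic (bs ! i)" "bs ! i \<le> bs ! Suc i"
      using i bs01 dy nth_mem[of i bs] sorted_wrt_nth_less[OF sorted, of i "Suc i"]
      by (simp_all add: subset_iff)
    then have "dyadic c"
      using kc by (rule thompsonF_intercept_dyadic[OF f])
    then show ?thesis
      using kc by (auto elim!: eventually_mono[OF dyadic_eventually_Ints_shift[of c k]])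
  qed
  then have "\<forall>\<^sub>F M in sequentially. \<forall>i\<in>{..<length bs - 1}. \<exists>(k::int) c m.
      (\<forall>x\<in>{bs ! i .. bs ! Suc i}. f x = 2 powr k * x + c) \<and> int M = k + int m \<and> c * 2 ^ m \<in> \<int>"
    by (intro eventually_ball_finite) auto
  moreover have "\<forall>\<^sub>F M in sequentially. \<forall>b\<in>set bs. b * 2 ^ M \<in> \<int>"
    using dy by (intro eventually_ball_finite) (auto simp: dyadic_iff_eventually_Ints)
  ultimately show ?thesis
  proof eventually_elim
    case (elim M)
    show ?case
    proof (intro allI impI)
      fix u :: "bool list" assume u: "length u = M"
      then have "\<forall>b\<in>set bs. b * 2 ^ length u \<in> \<int>"
        using elim(2) by simp
      then obtain i where i: "Suc i < length bs" and piece: "dyadic_cell u \<subseteq> {bs ! i .. bs ! Suc i}"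
        by (rule dyadic_cell_subset_piece[OF ne hd last])
      have "i \<in> {..<length bs - 1}"
        using i by simp
      then obtain k :: int and c m where kc: "\<forall>x\<in>{bs ! i .. bs ! Suc i}. f x = 2 powr k * x + c"
        and m: "int (length u) = k + int m" "c * 2 ^ m \<in> \<int>"
        using bspec[OF elim(1)] u by blast
      have aff: "\<forall>x\<in>dyadic_cell u. f x = 2 powr k * x + c"
        using kc piece by blast
      have range: "f ` dyadic_cell u \<subseteq> {0..1}"
        using dyadic_cell_subset_unit thompsonF_maps[OF f] by blast
      show "\<exists>v. has_branches f u v"
        using has_branches_if_affine[OF aff m range] by blast
    qed
  qed
qed

lemma thompsonF_has_branches_mixed:
  assumes f: "f \<in> thompsonF" and v: "has_branches f u v"
    and u: "0 < fin_word_val u" "fin_word_val u + 1 / 2 ^ length u < 1"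
  shows "mixed v"
proof (rule mixedI)
  have mono: "strict_mono_on {0..1} f"
    using f by (rule thompsonF_strict_mono)
  have "0 < 1 / (2::real) ^ length u"
    by simp
  with u have "fin_word_val u \<le> 1"
    by linarith
  show "0 < fin_word_val v"
    using has_branches_ends(1)[OF v] strict_mono_on_less[OF mono, of 0 "fin_word_val u"] u
      \<open>fin_word_val u \<le> 1\<close>
    by (simp add: thompsonF_0[OF f])
  show "fin_word_val v + 1 / 2 ^ length v < 1"
    using has_branches_ends(2)[OF v] u fin_word_val_bounds(1)[of u]
      strict_mono_on_less[OF mono, of "fin_word_val u + 1 / 2 ^ length u" 1]
    by (simp add: thompsonF_1[OF f])
qed

lemma Cl_memI_dyadic_cells:
  assumes f: "f \<in> thompsonF"
    and cells: "\<And>u. length u = M \<Longrightarrow> \<exists>h\<in>H. \<forall>x\<in>dyadic_cell u. f x = h x"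
  shows "f \<in> Cl H"
proof -
  define as where "as = map (\<lambda>i. real i / 2 ^ M) [0..<Suc (2 ^ M)]"
  have len: "length as = Suc (2 ^ M)"
    by (simp add: as_def)
  have nth: "as ! i = real i / 2 ^ M" if "i < Suc (2 ^ M)" for i
    using that by (simp add: as_def del: upt_Suc)
  have "sorted_wrt (<) as"
    unfolding sorted_wrt_iff_nth_less len by (auto simp: nth divide_strict_right_mono)
  moreover have "as \<noteq> []"
    using len by auto
  then have "hd as = 0" "last as = 1"
    using nth[of 0] nth[of "2 ^ M"] len by (simp_all add: hd_conv_nth last_conv_nth)
  moreover have "\<exists>h\<in>H. \<forall>x\<in>{as ! i..as ! Suc i}. f x = h x" if i: "Suc i < length as" for i
  proof -
    obtain u where u: "length u = M" "fin_word_val u = real i / 2 ^ M"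
      using ex_word_fin_word_val[of i M] i len by auto
    then have "dyadic_cell u = {as ! i..as ! Suc i}"
      using i len by (simp add: dyadic_cell_def nth add_divide_distrib)
    then show ?thesis
      using cells[OF u(1)] by simp
  qed
  moreover have "length as \<ge> 2"
    using len by simp
  ultimately show ?thesis
    unfolding Cl_def using f by blast
qed

lemma trivial_germs_id_near_ends:
  assumes "f \<in> trivial_germs"
  obtains \<delta> where "\<delta> > 0" "\<And>x. x \<in> {0..1} \<Longrightarrow> x < \<delta> \<or> 1 - \<delta> < x \<Longrightarrow> f x = x"
proof -
  obtain \<delta>0 \<delta>1 where \<delta>: "\<delta>0 > 0" "\<delta>1 > 0"
    and near: "\<And>x. x \<in> {0..1} \<Longrightarrow> \<bar>x\<bar> < \<delta>0 \<Longrightarrow> f x = x"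
      "\<And>x. x \<in> {0..1} \<Longrightarrow> \<bar>x - 1\<bar> < \<delta>1 \<Longrightarrow> f x = x"
    using assms unfolding trivial_germs_def slope_at_def by force
  show thesis
    by (rule that[of "min \<delta>0 \<delta>1"]) (use \<delta> near in auto)
qed

lemma trivial_germs_subset_Cl:
  assumes H: "subgroup H thompsonG" and mixed_sim: "\<And>u v. mixed u \<Longrightarrow> mixed v \<Longrightarrow> sim H u v"
  shows "trivial_germs \<subseteq> Cl H"
proof
  fix f assume f_germs: "f \<in> trivial_germs"
  then have f: "f \<in> thompsonF"
    by (simp add: trivial_germs_def)
  obtain \<delta> where \<delta>: "\<delta> > 0" and near: "\<And>x. x \<in> {0..1} \<Longrightarrow> x < \<delta> \<or> 1 - \<delta> < x \<Longrightarrow> f x = x"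
    using trivial_germs_id_near_ends[OF f_germs] by blast
  have "(\<lambda>M. (1 / 2) ^ M :: real) \<longlonglongrightarrow> 0"
    by (rule LIMSEQ_realpow_zero) auto
  then have "\<forall>\<^sub>F M in sequentially. (1 / 2) ^ M < \<delta>"
    using \<delta> by (rule order_tendstoD(2))
  then have "\<forall>\<^sub>F M in sequentially. (1 / 2) ^ M < \<delta> \<and> (\<forall>u. length u = M \<longrightarrow> (\<exists>v. has_branches f u v))"
    using thompsonF_eventually_has_branches[OF f] by (rule eventually_conj)
  then obtain M where "\<forall>n\<ge>M. (1 / 2) ^ n < \<delta> \<and> (\<forall>u. length u = n \<longrightarrow> (\<exists>v. has_branches f u v))"
    unfolding eventually_sequentially by blast
  then have M: "1 / 2 ^ M < \<delta>" and branches: "\<And>u. length u = M \<Longrightarrow> \<exists>v. has_branches f u v"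
    by (auto simp: power_one_over)
  have "id \<in> H"
    using subgroup.one_closed[OF H] by simp
  show "f \<in> Cl H"
  proof (rule Cl_memI_dyadic_cells[OF f])
    fix u :: "bool list" assume u: "length u = M"
    define x0 where "x0 = fin_word_val u"
    have x0: "0 \<le> x0" "x0 + 1 / 2 ^ M \<le> 1"
      using fin_word_val_bounds[of u] u by (simp_all add: x0_def)
    show "\<exists>h\<in>H. \<forall>x\<in>dyadic_cell u. f x = h x"
    \<comment> \<open>An interior cell and its image are both mixed; an end cell lies where \<open>f = id\<close>.\<close>
    proof (cases "0 < x0 \<and> x0 + 1 / 2 ^ M < 1")
      case True
      obtain v where v: "has_branches f u v"
        using branches[OF u] by blast
      have "mixed u" "mixed v"
        using True u thompsonF_has_branches_mixed[OF f v] by (simp_all add: mixedI x0_def)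
      then obtain h where "h \<in> H" "has_branches h u v"
        using mixed_sim unfolding sim_def by blast
      then show ?thesis
        using has_branches_agree[OF v] by blast
    next
      case False
      then have "x0 = 0 \<or> x0 + 1 / 2 ^ M = 1"
        using x0 by auto
      then have "f x = id x" if "x \<in> dyadic_cell u" for x
        using that x0 M near[of x] by (auto simp: dyadic_cell_def x0_def u)
      then show ?thesis
        using \<open>id \<in> H\<close> by blast
    qed
  qed
qed

theorem lemma2p4:
  assumes sub: "subgroup H thompsonG"
    and h1: "\<And>r::nat. r \<ge> 1 \<Longrightarrow> sim H (replicate r True @ [False]) [True, False]"
    and h2: "\<And>s::nat. s \<ge> 1 \<Longrightarrow> sim H (replicate s False @ [True]) [False, True]"
    and h3: "sim H [False, True] [True, False]"
    and h4: "sim H [True, False] [False, True, False]"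
    and h5: "sim H [False, True, False] [False, True, True]"
  shows "derived thompsonG (carrier thompsonG) \<subseteq> Cl H"
proof -
  have "trivial_germs \<subseteq> Cl H"
    using sub mixed_words_sim[OF sub h1 h2 h3 h4 h5] by (rule trivial_germs_subset_Cl)
  with derived_trivial_germs show ?thesis
    by blast
qed

end
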